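(* Consider the chain pendulum on a cart described in the context, with configuration $(q_1,\dots,q_n,x)\in(\mathsf{S}^2)^n\times\mathbb{R}^2$, Lagrangian $L=T-V$, and a horizontal control force $u\in\mathbb{R}^2$ acting on the cart. The Euler–Lagrange equations of this system on $(\mathsf{S}^2)^n\times\mathbb{R}^2$ (obtained from the Lagrange–d'Alembert principle, with variations $\delta q_i=\xi_i\times q_i$, $\xi_i\cdot q_i=0$, and virtual work $u\cdot\delta x$) are \[ M_{00}\ddot x+\sum_{j=1}^n M_{0j}\ddot q_j=u, \] and, for each $i=1,\dots,n$, \[ -\hat q_i^2 M_{i0}\ddot x+M_{ii}\ddot q_i-\sum_{j\neq i}M_{ij}\hat q_i^2\ddot q_j=-\|\dot q_i\|^2M_{ii}q_i-\Big(\sum_{a=i}^n m_a\Big)g\,l_i\,\hat q_i^2e_3 . \] Equivalently, in terms of the angular velocities $\omega_i\in\mathbb{R}^3$ (with $\omega_i\cdot q_i=0$), they can be written as \[ M_{00}\ddot x-\sum_{j=1}^n M_{0j}\hat q_j\dot\omega_j=\sum_{j=1}^n M_{0j}\|\omega_j\|^2q_j+u, \] \[ \hat q_iM_{i0}\ddot x+M_{ii}\dot\omega_i-\sum_{j\neq i}M_{ij}\hat q_i\hat q_j\dot\omega_j=\sum_{j\neq i}M_{ij}\|\omega_j\|^2\hat q_iq_j+\Big(\sum_{a=i}^n m_a\Big)g\,l_i\,\hat q_ie_3,\quad i=1,\dots,n, \] \[ \dot q_i=\omega_i\times q_i,\quad i=1,\dots,n. \]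
   Context: Let $n\ge1$. $\mathsf{S}^2=\{q\in\mathbb{R}^3:\|q\|=1\}$. Let $e_1,e_2,e_3$ be the standard basis of $\mathbb{R}^3$, with $e_3$ the direction of gravity, $g>0$ the gravitational acceleration, and $C=[e_1,e_2]\in\mathbb{R}^{3\times2}$. For $y\in\mathbb{R}^3$, $\hat y$ denotes the $3\times3$ skew-symmetric matrix with $\hat y z=y\times z$ for all $z\in\mathbb{R}^3$. A cart of mass $m>0$ moves in a horizontal plane, with position $x\in\mathbb{R}^2$ (so its inertial position is $Cx$). A serial chain of $n$ massless links joined by spherical joints is attached to the cart; link $i$ has length $l_i>0$, unit direction vector $q_i\in\mathsf{S}^2$, and a point mass $m_i>0$ at its outboard end, whose position is $x_i=Cx+\sum_{a=1}^i l_aq_a$. The angular velocity $\omega_i\in\mathbb{R}^3$ of link $i$ satisfies $\dot q_i=\omega_i\times q_i$, $\omega_i\cdot q_i=0$. Define $M_{00}=m+\sum_{i=1}^n m_i\in\mathbb{R}$, $M_{0i}=\big(\sum_{a=i}^n m_a\big)l_i\,C^T\in\mathbb{R}^{2\times3}$, $M_{i0}=M_{0i}^T$, and $M_{ij}=\big(\sum_{a=\max\{i,j\}}^n m_a\big)l_il_j\in\mathbb{R}$ for $i,j=1,\dots,n$. The kinetic energy is $T=\tfrac12M_{00}\|\dot x\|^2+\dot x\cdot\sum_{i=1}^nM_{0i}\dot q_i+\tfrac12\sum_{i,j=1}^nM_{ij}\dot q_i\cdot\dot q_j$, the potential energy is $V=-\sum_{i=1}^n\big(\sum_{a=i}^n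 m_a\big)g\,l_i\,e_3\cdot q_i$, and $L=T-V$. A control force $u\in\mathbb{R}^2$ acts on the cart. *)

theory Defs
  imports "HOL-Analysis.Analysis"
begin

text \<open>Parameters: cart mass m, bob masses mm i,
  link lengths l i, gravity g, number of links n (links indexed 1..n).\<close>

definition mu :: "(nat \<Rightarrow> real) \<Rightarrow> nat \<Rightarrow> nat \<Rightarrow> real" where
  "mu mm n i = (\<Sum>a=i..n. mm a)"

definition CC :: "real^2 \<Rightarrow> real^3" where
  "CC v = vector [v$1, v$2, 0]"

definition CT :: "real^3 \<Rightarrow> real^2" where
  "CT w = vector [w$1, w$2]"

definition e3 :: "real^3" where
  "e3 = vector [0, 0, 1]"

definition hat :: "real^3 \<Rightarrow> real^3 \<Rightarrow> real^3" where
  "hat y z = cross3 y z"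

definition M00 :: "real \<Rightarrow> (nat \<Rightarrow> real) \<Rightarrow> nat \<Rightarrow> real" where
  "M00 m mm n = m + (\<Sum>i=1..n. mm i)"

text \<open>M_{0i} applied to a vector in R^3 (a 2x3 matrix) and M_{i0} applied to a vector in R^2\<close>
definition M0 :: "(nat \<Rightarrow> real) \<Rightarrow> (nat \<Rightarrow> real) \<Rightarrow> nat \<Rightarrow> nat \<Rightarrow> real^3 \<Rightarrow> real^2" where
  "M0 mm l n i w = (mu mm n i * l i) *\<^sub>R CT w"

definition M0' :: "(nat \<Rightarrow> real) \<Rightarrow> (nat \<Rightarrow> real) \<Rightarrow> nat \<Rightarrow> nat \<Rightarrow> real^2 \<Rightarrow> real^3" where
  "M0' mm l n i v = (mu mm n i * l i) *\<^sub>R CC v"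

definition MM :: "(nat \<Rightarrow> real) \<Rightarrow> (nat \<Rightarrow> real) \<Rightarrow> nat \<Rightarrow> nat \<Rightarrow> nat \<Rightarrow> real" where
  "MM mm l n i j = mu mm n (max i j) * l i * l j"

text \<open>Lagrangian L = T - V as a function on the ambient space
  (x, q_1..q_n, xdot, qdot_1..qdot_n).\<close>
definition Lag :: "real \<Rightarrow> (nat \<Rightarrow> real) \<Rightarrow> (nat \<Rightarrow> real) \<Rightarrow> real \<Rightarrow> nat \<Rightarrow>
    real^2 \<Rightarrow> (nat \<Rightarrow> real^3) \<Rightarrow> real^2 \<Rightarrow> (nat \<Rightarrow> real^3) \<Rightarrow> real" where
  "Lag m mm l g n X Q Xd Qd =
     (1/2) * M00 m mm n * (norm Xd)^2
     + Xd \<bullet> (\<Sum>i=1..n. M0 mm l n i (Qd i))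
     + (1/2) * (\<Sum>i=1..n. \<Sum>j=1..n. MM mm l n i j * (Qd i \<bullet> Qd j))
     - (- (\<Sum>i=1..n. mu mm n i * g * l i * (e3 \<bullet> Q i)))"

text \<open>Lagrange-d'Alembert principle along the trajectory (q, x) with velocities q', x'
  and control u: for every time interval [a,b] and all C^1 variations
  delta q_i = xi_i \<times> q_i (xi_i \<bullet> q_i = 0) and delta x, vanishing at a and b,
  delta (integral of L) + integral of u \<bullet> delta x = 0.\<close>
definition LdA :: "real \<Rightarrow> (nat \<Rightarrow> real) \<Rightarrow> (nat \<Rightarrow> real) \<Rightarrow> real \<Rightarrow> nat \<Rightarrow>
    (nat \<Rightarrow> real \<Rightarrow> real^3) \<Rightarrow> (nat \<Rightarrow> real \<Rightarrow> real^3) \<Rightarrow>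
    (real \<Rightarrow> real^2) \<Rightarrow> (real \<Rightarrow> real^2) \<Rightarrow> (real \<Rightarrow> real^2) \<Rightarrow> bool" where
  "LdA m mm l g n q q' x x' u \<longleftrightarrow>
    (\<forall>a b. a < b \<longrightarrow>
      (\<forall>(\<xi>::nat \<Rightarrow> real \<Rightarrow> real^3) \<xi>' (dx::real \<Rightarrow> real^2) dx'.
        (\<forall>i\<in>{1..n}. \<forall>t. (\<xi> i has_vector_derivative \<xi>' i t) (at t)) \<and>
        (\<forall>i\<in>{1..n}. continuous_on UNIV (\<xi>' i)) \<and>
        (\<forall>t. (dx has_vector_derivative dx' t) (at t)) \<and> continuous_on UNIV dx' \<and>
        (\<forall>i\<in>{1..n}. \<forall>t\<in>{a..b}. \<xi> i t \<bullet> q i t = 0) \<and>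
        (\<forall>i\<in>{1..n}. \<xi> i a = 0 \<and> \<xi> i b = 0) \<and> dx a = 0 \<and> dx b = 0
        \<longrightarrow>
        integral {a..b} (\<lambda>t.
            deriv (\<lambda>\<epsilon>. Lag m mm l g n
                (x t + \<epsilon> *\<^sub>R dx t)
                (\<lambda>i. q i t + \<epsilon> *\<^sub>R cross3 (\<xi> i t) (q i t))
                (x' t + \<epsilon> *\<^sub>R dx' t)
                (\<lambda>i. q' i t + \<epsilon> *\<^sub>R (cross3 (\<xi>' i t) (q i t) + cross3 (\<xi> i t) (q' i t)))) 0
            + u t \<bullet> dx t) = 0))"

definition EL1 :: "real \<Rightarrow> (nat \<Rightarrow> real) \<Rightarrow> (nat \<Rightarrow> real) \<Rightarrow> real \<Rightarrow> nat \<Rightarrow>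
    (nat \<Rightarrow> real \<Rightarrow> real^3) \<Rightarrow> (nat \<Rightarrow> real \<Rightarrow> real^3) \<Rightarrow> (nat \<Rightarrow> real \<Rightarrow> real^3) \<Rightarrow>
    (real \<Rightarrow> real^2) \<Rightarrow> (real \<Rightarrow> real^2) \<Rightarrow> real \<Rightarrow> bool" where
  "EL1 m mm l g n q q' q'' x'' u t \<longleftrightarrow>
    M00 m mm n *\<^sub>R x'' t + (\<Sum>j=1..n. M0 mm l n j (q'' j t)) = u t \<and>
    (\<forall>i\<in>{1..n}.
       - hat (q i t) (hat (q i t) (M0' mm l n i (x'' t)))
       + MM mm l n i i *\<^sub>R q'' i t
       - (\<Sum>j\<in>{1..n}-{i}. MM mm l n i j *\<^sub>R hat (q i t) (hat (q i t) (q'' j t)))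
     = - ((norm (q' i t))^2 * MM mm l n i i) *\<^sub>R q i t
       - (mu mm n i * g * l i) *\<^sub>R hat (q i t) (hat (q i t) e3))"

definition EL2 :: "real \<Rightarrow> (nat \<Rightarrow> real) \<Rightarrow> (nat \<Rightarrow> real) \<Rightarrow> real \<Rightarrow> nat \<Rightarrow>
    (nat \<Rightarrow> real \<Rightarrow> real^3) \<Rightarrow> (nat \<Rightarrow> real \<Rightarrow> real^3) \<Rightarrow>
    (nat \<Rightarrow> real \<Rightarrow> real^3) \<Rightarrow> (nat \<Rightarrow> real \<Rightarrow> real^3) \<Rightarrow>
    (real \<Rightarrow> real^2) \<Rightarrow> (real \<Rightarrow> real^2) \<Rightarrow> real \<Rightarrow> bool" where
  "EL2 m mm l g n q q' w w' x'' u t \<longleftrightarrow>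
    M00 m mm n *\<^sub>R x'' t - (\<Sum>j=1..n. M0 mm l n j (hat (q j t) (w' j t)))
      = (\<Sum>j=1..n. M0 mm l n j ((norm (w j t))^2 *\<^sub>R q j t)) + u t \<and>
    (\<forall>i\<in>{1..n}.
       hat (q i t) (M0' mm l n i (x'' t))
       + MM mm l n i i *\<^sub>R w' i t
       - (\<Sum>j\<in>{1..n}-{i}. MM mm l n i j *\<^sub>R hat (q i t) (hat (q j t) (w' j t)))
     = (\<Sum>j\<in>{1..n}-{i}. (MM mm l n i j * (norm (w j t))^2) *\<^sub>R hat (q i t) (q j t))
       + (mu mm n i * g * l i) *\<^sub>R hat (q i t) e3) \<and>
    (\<forall>i\<in>{1..n}. q' i t = cross3 (w i t) (q i t))"

end

theory Submission
  imports Defs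
begin

text \<open>The Lagrange--d'Alembert integrand equals the time derivative of the boundary term
  \<open>\<partial>L/\<partial>x' \<bullet> \<delta>x + \<Sum>\<^sub>i \<partial>L/\<partial>q\<^sub>i' \<bullet> \<delta>q\<^sub>i\<close> plus the residual
  \<open>(u - d/dt \<partial>L/\<partial>x') \<bullet> \<delta>x + \<Sum>\<^sub>i F\<^sub>i \<bullet> (\<xi>\<^sub>i \<times> q\<^sub>i)\<close>,
  where \<open>F\<^sub>i = \<partial>L/\<partial>q\<^sub>i - d/dt \<partial>L/\<partial>q\<^sub>i'\<close>. The boundary term integrates to zero, so by the
  fundamental lemma of the calculus of variations (tested with the bump \<open>(t - a)(b - t)\<close>) the
  principle holds iff \<open>d/dt \<partial>L/\<partial>x' = u\<close> and \<open>F\<^sub>i \<bullet> (\<xi> \<times> q\<^sub>i) = \<xi> \<bullet> (q\<^sub>i \<times> F\<^sub>i)\<close> vanishes for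
  all \<open>\<xi> \<perp> q\<^sub>i\<close>, i.e. \<open>q\<^sub>i \<times> F\<^sub>i = 0\<close>. For a unit vector \<open>q\<close>, \<open>q \<times> (q \<times> v) = 0\<close> iff
  \<open>q \<times> v = 0\<close>, which gives the first form. The only angular velocity orthogonal to \<open>q\<^sub>i\<close> is
  \<open>\<omega>\<^sub>i = q\<^sub>i \<times> q\<^sub>i'\<close>, and substituting it (with \<open>\<omega>\<^sub>i' = q\<^sub>i \<times> q\<^sub>i''\<close>) turns the second form
  into the same equations.\<close>

lemma bounded_bilinear_cross3: "bounded_bilinear cross3"
  using bilinear_conv_bounded_bilinear bilinear_cross by blast

lemma has_vector_derivative_inner:
  "(f has_vector_derivative f') (at s within S) \<Longrightarrow> (g has_vector_derivative g') (at s within S) \<Longrightarrow>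
   D = f s \<bullet> g' + f' \<bullet> g s \<Longrightarrow> ((\<lambda>s. f s \<bullet> g s) has_vector_derivative D) (at s within S)"
  using bounded_bilinear.has_vector_derivative[OF bounded_bilinear_inner] by blast

lemma has_vector_derivative_cross3:
  "(f has_vector_derivative f') (at s within S) \<Longrightarrow> (g has_vector_derivative g') (at s within S) \<Longrightarrow>
   D = cross3 (f s) g' + cross3 f' (g s) \<Longrightarrow>
   ((\<lambda>s. cross3 (f s) (g s)) has_vector_derivative D) (at s within S)"
  using bounded_bilinear.has_vector_derivative[OF bounded_bilinear_cross3] by blast

lemmas cross3_linear_right = bounded_bilinear.diff_right[OF bounded_bilinear_cross3]
  bounded_bilinear.add_right[OF bounded_bilinear_cross3]
  bounded_bilinear.sum_right[OF bounded_bilinear_cross3]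
  bounded_bilinear.minus_right[OF bounded_bilinear_cross3] cross_mult_right

lemma cross3_cross3: "cross3 a (cross3 b c) = (a \<bullet> c) *\<^sub>R b - (a \<bullet> b) *\<^sub>R c"
  by (simp add: cross3_simps forall_3)

lemma inner_cross3_rotate: "a \<bullet> cross3 b c = b \<bullet> cross3 c a"
  by (simp add: cross3_simps)

lemma eq_iff_of_diff_eq: "(a::'a::ab_group_add) - b = c \<Longrightarrow> (c = 0 \<longleftrightarrow> P) \<Longrightarrow> (a = b \<longleftrightarrow> P)"
  by auto

lemma cross3_cross3_eq_0_iff:
  assumes "q \<bullet> q = 1"
  shows "cross3 q (cross3 q v) = 0 \<longleftrightarrow> cross3 q v = 0"
proof
  assume "cross3 q (cross3 q v) = 0"
  hence "v = (q \<bullet> v) *\<^sub>R q" using assms by (simp add: cross3_cross3)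
  hence "cross3 q v = (q \<bullet> v) *\<^sub>R cross3 q q" by (metis cross_mult_right)
  thus "cross3 q v = 0" by simp
qed simp

lemma sphere_curve_inner_derivative:
  fixes q :: "real \<Rightarrow> 'a::real_inner"
  assumes "\<forall>t. norm (q t) = 1" and "\<forall>t. (q has_vector_derivative q' t) (at t)"
  shows "q t \<bullet> q' t = 0"
proof -
  have "((\<lambda>s. q s \<bullet> q s) has_vector_derivative (q t \<bullet> q' t + q' t \<bullet> q t)) (at t)"
    using assms(2) by (intro has_vector_derivative_inner refl) auto
  moreover have "(\<lambda>s. q s \<bullet> q s) = (\<lambda>s. 1)" using assms(1) by (simp add: norm_eq_1)
  ultimately have "q t \<bullet> q' t + q' t \<bullet> q t = 0"
    using vector_derivative_unique_at[OF _ has_vector_derivative_const] by auto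
  thus ?thesis by (simp add: inner_commute)
qed

lemma sphere_curve_inner_second_derivative:
  fixes q :: "real \<Rightarrow> 'a::real_inner"
  assumes "\<forall>t. norm (q t) = 1" and "\<forall>t. (q has_vector_derivative q' t) (at t)"
    and "\<forall>t. (q' has_vector_derivative q'' t) (at t)"
  shows "q t \<bullet> q'' t = - (q' t \<bullet> q' t)"
proof -
  have "((\<lambda>s. q s \<bullet> q' s) has_vector_derivative (q t \<bullet> q'' t + q' t \<bullet> q' t)) (at t)"
    using assms(2,3) by (intro has_vector_derivative_inner refl) auto
  moreover have "(\<lambda>s. q s \<bullet> q' s) = (\<lambda>s. 0)"
    using sphere_curve_inner_derivative[OF assms(1,2)] by auto
  ultimately have "q t \<bullet> q'' t + q' t \<bullet> q' t = 0"
    using vector_derivative_unique_at[OF _ has_vector_derivative_const] by auto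
  thus ?thesis by simp
qed

lemma bump_has_integral:
  fixes a b :: real
  assumes "a \<le> b"
  shows "((\<lambda>t. (t - a) * (b - t)) has_integral (b - a)^3 / 6) {a..b}"
proof -
  define G where "G t = (a + b) * t^2 / 2 - a * b * t - t^3 / 3" for t :: real
  have "((\<lambda>t. (t - a) * (b - t)) has_integral (G b - G a)) {a..b}"
    unfolding G_def
    apply (rule fundamental_theorem_of_calculus[OF assms])
    apply (rule has_real_derivative_iff_has_vector_derivative[THEN iffD1])
    apply (rule derivative_eq_intros refl | simp)+
    by (simp add: algebra_simps power2_eq_square)
  moreover have "G b - G a = (b - a)^3 / 6"
    by (simp add: G_def field_simps power3_eq_cube power2_eq_square)
  ultimately show ?thesis by simp
qed

lemma bump_has_derivative: "((\<lambda>s. (s - a) * (b - s)) has_real_derivative (a + b - 2 * s)) (at s)"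
  by (rule derivative_eq_intros refl | simp add: algebra_simps)+

lemma bump_scaleR_has_vector_derivative:
  "(f has_vector_derivative f') (at t) \<Longrightarrow>
   ((\<lambda>s. ((s - a) * (b - s)) *\<^sub>R f s) has_vector_derivative
      (a + b - 2 * t) *\<^sub>R f t + ((t - a) * (b - t)) *\<^sub>R f') (at t)"
  by (drule has_vector_derivative_scaleR[OF bump_has_derivative]) (simp only: add.commute)

lemma fundamental_lemma_calculus_of_variations:
  fixes h :: "real \<Rightarrow> real"
  assumes cont: "continuous_on UNIV h"
    and bump: "\<And>a b. a < b \<Longrightarrow> integral {a..b} (\<lambda>t. ((t - a) * (b - t)) * h t) = 0"
  shows "h t0 = 0"
proof (rule ccontr)
  assume ne: "h t0 \<noteq> 0"
  define c where "c = h t0"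
  have "isCont h t0" using cont by (simp add: continuous_on_eq_continuous_at)
  then obtain d where d: "d > 0" "\<And>t. dist t t0 < d \<Longrightarrow> dist (h t) (h t0) < \<bar>c\<bar>/2"
    using ne unfolding c_def continuous_at_eps_delta by (metis zero_less_abs_iff half_gt_zero)
  define a where "a = t0 - d/2"
  define b where "b = t0 + d/2"
  have ab: "a < b" using d by (simp add: a_def b_def)
  \<comment> \<open>on \<open>[a, b]\<close> the sign of \<open>h\<close> is that of \<open>c\<close>, so \<open>c h \<ge> c\<^sup>2/2\<close> there\<close>
  have pointwise: "c^2/2 * ((t - a) * (b - t)) \<le> c * (((t - a) * (b - t)) * h t)"
    if t: "t \<in> {a..b}" for t
  proof -
    have "dist t t0 < d" using t d by (auto simp: a_def b_def dist_real_def)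
    hence "\<bar>h t - c\<bar> < \<bar>c\<bar>/2" using d(2) by (simp add: c_def dist_real_def)
    hence close: "\<bar>h t - c\<bar> \<le> \<bar>c\<bar>/2" by simp
    have "\<bar>c * (h t - c)\<bar> = \<bar>c\<bar> * \<bar>h t - c\<bar>" by (rule abs_mult)
    also have "\<dots> \<le> \<bar>c\<bar> * (\<bar>c\<bar>/2)" by (rule mult_left_mono[OF close]) simp
    also have "\<dots> = c^2/2" by (simp add: power2_eq_square abs_mult_self_eq flip: abs_mult)
    finally have "\<bar>c * (h t - c)\<bar> \<le> c^2/2" .
    moreover have "c * h t = c^2 + c * (h t - c)" by (simp add: algebra_simps power2_eq_square)
    ultimately have "c^2/2 \<le> c * h t" by linarith
    moreover have "(t - a) * (b - t) \<ge> 0" using t by auto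
    ultimately have "c^2/2 * ((t - a) * (b - t)) \<le> (c * h t) * ((t - a) * (b - t))"
      by (rule mult_right_mono)
    thus ?thesis by (simp add: ac_simps)
  qed
  have "continuous_on {a..b} (\<lambda>t. c * (((t - a) * (b - t)) * h t))"
    by (intro continuous_intros continuous_on_subset[OF cont]) auto
  hence "integral {a..b} (\<lambda>t. c^2/2 * ((t - a) * (b - t)))
      \<le> integral {a..b} (\<lambda>t. c * (((t - a) * (b - t)) * h t))"
    by (intro integral_le[OF _ _ pointwise]) (auto intro!: integrable_continuous_interval continuous_intros)
  also have "\<dots> = c * integral {a..b} (\<lambda>t. ((t - a) * (b - t)) * h t)" by simp
  also have "\<dots> = 0" using bump[OF ab] by simp
  finally have "c^2/2 * ((b - a)^3/6) \<le> 0"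
    using integral_unique[OF bump_has_integral[of a b]] ab by simp
  moreover have "c^2/2 * ((b - a)^3/6) > 0" using ne ab by (simp add: c_def)
  ultimately show False by simp
qed

lemma bounded_linear_CT: "bounded_linear CT"
  by (intro linear_conv_bounded_linear[THEN iffD1] linearI)
    (auto simp: CT_def vec_eq_iff forall_2 vector_def)

lemma bounded_linear_CC: "bounded_linear CC"
  by (intro linear_conv_bounded_linear[THEN iffD1] linearI)
    (auto simp: CC_def vec_eq_iff forall_3 vector_def)

lemma inner_CT: "v \<bullet> CT w = CC v \<bullet> w"
  by (simp add: CT_def CC_def inner_vec_def sum_2 sum_3 vector_def)

lemma bounded_linear_M0: "bounded_linear (M0 mm l n i)"
  unfolding M0_def[abs_def] by (rule bounded_linear_compose[OF bounded_linear_scaleR_right bounded_linear_CT])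

lemma bounded_linear_M0': "bounded_linear (M0' mm l n i)"
  unfolding M0'_def[abs_def] by (rule bounded_linear_compose[OF bounded_linear_scaleR_right bounded_linear_CC])

lemma M0_scaleR: "M0 mm l n i (c *\<^sub>R v) = c *\<^sub>R M0 mm l n i v"
  by (simp add: M0_def CT_def vec_eq_iff forall_2 vector_def)

lemma M0_diff: "M0 mm l n i (v - w) = M0 mm l n i v - M0 mm l n i w"
  by (simp add: M0_def CT_def vec_eq_iff forall_2 vector_def algebra_simps)

lemma M0_uminus: "M0 mm l n i (- v) = - M0 mm l n i v"
  by (simp add: M0_def CT_def vec_eq_iff forall_2 vector_def)

lemma inner_M0: "v \<bullet> M0 mm l n i w = M0' mm l n i v \<bullet> w"
  by (simp add: M0_def M0'_def inner_CT)

lemma MM_commute: "MM mm l n i j = MM mm l n j i"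
  by (simp add: MM_def max.commute)

lemma Lag_variation_has_derivative:
  "((\<lambda>e. Lag m mm l g n (X + e *\<^sub>R dX) (\<lambda>i. Q i + e *\<^sub>R dQ i) (Xd + e *\<^sub>R dXd) (\<lambda>i. Qd i + e *\<^sub>R dQd i))
     has_real_derivative
     (M00 m mm n * (Xd \<bullet> dXd) + dXd \<bullet> (\<Sum>i=1..n. M0 mm l n i (Qd i)) + Xd \<bullet> (\<Sum>i=1..n. M0 mm l n i (dQd i))
      + (1/2) * (\<Sum>i=1..n. \<Sum>j=1..n. MM mm l n i j * (Qd i \<bullet> dQd j + dQd i \<bullet> Qd j))
      + (\<Sum>i=1..n. mu mm n i * g * l i * (e3 \<bullet> dQ i)))) (at 0)"
  unfolding Lag_def has_field_derivative_def power2_norm_eq_inner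
  apply (rule derivative_eq_intros bounded_linear.has_derivative[OF bounded_linear_M0] | simp)+
  apply (simp add: fun_eq_iff M0_scaleR flip: scaleR_sum_right)
  apply (simp add: inner_commute[of dXd] mult.left_commute[of _ e] flip: sum_distrib_left)
  apply (simp add: sum_distrib_left algebra_simps sum.distrib)
  done

locale pendulum_motion =
  fixes m g :: real and mm l :: "nat \<Rightarrow> real" and n :: nat
    and q q' q'' :: "nat \<Rightarrow> real \<Rightarrow> real^3"
    and x x' x'' u :: "real \<Rightarrow> real^2"
  assumes q_unit: "\<forall>i\<in>{1..n}. \<forall>t. norm (q i t) = 1"
    and q_deriv: "\<forall>i\<in>{1..n}. \<forall>t. (q i has_vector_derivative q' i t) (at t)"
    and q'_deriv: "\<forall>i\<in>{1..n}. \<forall>t. (q' i has_vector_derivative q'' i t) (at t)"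
    and q''_cont: "\<forall>i\<in>{1..n}. continuous_on UNIV (q'' i)"
    and x'_deriv: "\<forall>t. (x' has_vector_derivative x'' t) (at t)"
    and x''_cont: "continuous_on UNIV x''"
    and u_cont: "continuous_on UNIV u"
begin

text \<open>\<open>p_cart\<close> and \<open>p_link i\<close> are the momenta \<open>\<partial>L/\<partial>x'\<close> and \<open>\<partial>L/\<partial>q\<^sub>i'\<close>;
  \<open>link_force i\<close> is \<open>\<partial>L/\<partial>q\<^sub>i - d/dt \<partial>L/\<partial>q\<^sub>i'\<close>.\<close>

definition "p_cart t = M00 m mm n *\<^sub>R x' t + (\<Sum>j=1..n. M0 mm l n j (q' j t))"
definition "p_cart' t = M00 m mm n *\<^sub>R x'' t + (\<Sum>j=1..n. M0 mm l n j (q'' j t))"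
definition "p_link i t = M0' mm l n i (x' t) + (\<Sum>j=1..n. MM mm l n i j *\<^sub>R q' j t)"
definition "p_link' i t = M0' mm l n i (x'' t) + (\<Sum>j=1..n. MM mm l n i j *\<^sub>R q'' j t)"
definition "link_force i t = (mu mm n i * g * l i) *\<^sub>R e3 - p_link' i t"

definition "boundary_term_deriv t dx dx' \<xi> \<xi>' = p_cart' t \<bullet> dx + p_cart t \<bullet> dx' +
   (\<Sum>i=1..n. p_link' i t \<bullet> cross3 (\<xi> i) (q i t) + p_link i t \<bullet> (cross3 (\<xi>' i) (q i t) + cross3 (\<xi> i) (q' i t)))"

definition "residual t dx \<xi> = (u t - p_cart' t) \<bullet> dx + (\<Sum>i=1..n. link_force i t \<bullet> cross3 (\<xi> i) (q i t))"

definition "admissible a b \<xi> \<xi>' dx dx' \<longleftrightarrow>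
  (\<forall>i\<in>{1..n}. \<forall>t. (\<xi> i has_vector_derivative \<xi>' i t) (at t)) \<and>
  (\<forall>i\<in>{1..n}. continuous_on UNIV (\<xi>' i)) \<and>
  (\<forall>t. (dx has_vector_derivative dx' t) (at t)) \<and> continuous_on UNIV dx' \<and>
  (\<forall>i\<in>{1..n}. \<forall>t\<in>{a..b}. \<xi> i t \<bullet> q i t = 0) \<and>
  (\<forall>i\<in>{1..n}. \<xi> i a = 0 \<and> \<xi> i b = 0) \<and> dx a = 0 \<and> dx b = 0"

definition "reduced_EL t \<longleftrightarrow> p_cart' t = u t \<and> (\<forall>i\<in>{1..n}. cross3 (q i t) (link_force i t) = 0)"

lemma q_inner_self: "i \<in> {1..n} \<Longrightarrow> q i t \<bullet> q i t = 1"
  using q_unit by (simp add: norm_eq_1)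

lemma q_inner_q': "i \<in> {1..n} \<Longrightarrow> q i t \<bullet> q' i t = 0"
  using q_unit q_deriv by (intro sphere_curve_inner_derivative) auto

lemma q_cross_q_cross_q'':
  "i \<in> {1..n} \<Longrightarrow> cross3 (q i t) (cross3 (q i t) (q'' i t)) = (- ((norm (q' i t))^2)) *\<^sub>R q i t - q'' i t"
  using q_inner_self sphere_curve_inner_second_derivative[of "q i" "q' i" "q'' i" t] q_unit q_deriv q'_deriv
  by (simp add: cross3_cross3 power2_norm_eq_inner)

lemma norm_q_cross_q': "i \<in> {1..n} \<Longrightarrow> (norm (cross3 (q i t) (q' i t)))^2 = (norm (q' i t))^2"
  using norm_cross_dot[of "q i t" "q' i t"] q_inner_q'[of i t] q_unit by simp

lemma q_continuous: "i \<in> {1..n} \<Longrightarrow> continuous_on UNIV (q i)"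
  using q_deriv by (intro continuous_on_vector_derivative[where f'="q' i"]) auto

lemma q'_continuous: "i \<in> {1..n} \<Longrightarrow> continuous_on UNIV (q' i)"
  using q'_deriv by (intro continuous_on_vector_derivative[where f'="q'' i"]) auto

lemma p_cart'_continuous: "continuous_on UNIV p_cart'"
  unfolding p_cart'_def[abs_def] using q''_cont x''_cont
  by (intro continuous_intros bounded_linear.continuous_on[OF bounded_linear_M0]) auto

lemma link_force_continuous: "continuous_on UNIV (link_force i)"
  unfolding link_force_def[abs_def] p_link'_def using q''_cont x''_cont
  by (intro continuous_intros bounded_linear.continuous_on[OF bounded_linear_M0']) auto

lemma p_cart_has_derivative: "(p_cart has_vector_derivative p_cart' t) (at t)"
  unfolding p_cart_def[abs_def] p_cart'_def using q'_deriv x'_deriv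
  by (intro has_vector_derivative_add has_vector_derivative_sum
      bounded_linear.has_vector_derivative[OF bounded_linear_scaleR_right]
      bounded_linear.has_vector_derivative[OF bounded_linear_M0]) auto

lemma p_link_has_derivative: "(p_link i has_vector_derivative p_link' i t) (at t)"
  unfolding p_link_def[abs_def] p_link'_def using q'_deriv x'_deriv
  by (intro has_vector_derivative_add has_vector_derivative_sum
      bounded_linear.has_vector_derivative[OF bounded_linear_scaleR_right]
      bounded_linear.has_vector_derivative[OF bounded_linear_M0']) auto

lemma Lag_variation_deriv_eq:
  "deriv (\<lambda>\<epsilon>. Lag m mm l g n (x t + \<epsilon> *\<^sub>R dx) (\<lambda>i. q i t + \<epsilon> *\<^sub>R cross3 (\<xi> i) (q i t))
       (x' t + \<epsilon> *\<^sub>R dx') (\<lambda>i. q' i t + \<epsilon> *\<^sub>R (cross3 (\<xi>' i) (q i t) + cross3 (\<xi> i) (q' i t)))) 0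
     + u t \<bullet> dx
   = boundary_term_deriv t dx dx' \<xi> \<xi>' + residual t dx \<xi>"
proof -
  define dq where "dq i = cross3 (\<xi> i) (q i t)" for i
  define dqd where "dqd i = cross3 (\<xi>' i) (q i t) + cross3 (\<xi> i) (q' i t)" for i
  have kinetic: "(\<Sum>i=1..n. \<Sum>j=1..n. MM mm l n i j * (q' i t \<bullet> dqd j + dqd i \<bullet> q' j t))
      = 2 * (\<Sum>i=1..n. \<Sum>j=1..n. MM mm l n i j * (q' j t \<bullet> dqd i))"
  proof -
    have "(\<Sum>i=1..n. \<Sum>j=1..n. MM mm l n i j * (q' i t \<bullet> dqd j))
        = (\<Sum>j=1..n. \<Sum>i=1..n. MM mm l n i j * (q' i t \<bullet> dqd j))" by (rule sum.swap)
    also have "\<dots> = (\<Sum>i=1..n. \<Sum>j=1..n. MM mm l n i j * (q' j t \<bullet> dqd i))"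
      by (simp add: MM_commute)
    finally show ?thesis by (simp add: distrib_left sum.distrib inner_commute[of "dqd _"])
  qed
  have coupling: "x' t \<bullet> (\<Sum>i=1..n. M0 mm l n i (dqd i)) = (\<Sum>i=1..n. M0' mm l n i (x' t) \<bullet> dqd i)"
    by (simp add: inner_sum_right inner_M0)
  have "boundary_term_deriv t dx dx' \<xi> \<xi>' + residual t dx \<xi>
      = u t \<bullet> dx + p_cart t \<bullet> dx' + (\<Sum>i=1..n. p_link i t \<bullet> dqd i)
        + (\<Sum>i=1..n. (p_link' i t + link_force i t) \<bullet> dq i)"
    by (simp add: boundary_term_deriv_def residual_def dq_def dqd_def sum.distrib
        inner_add_left inner_diff_left algebra_simps)
  also have "\<dots> = u t \<bullet> dx + M00 m mm n * (x' t \<bullet> dx') + dx' \<bullet> (\<Sum>i=1..n. M0 mm l n i (q' i t))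
      + (\<Sum>i=1..n. M0' mm l n i (x' t) \<bullet> dqd i) + (\<Sum>i=1..n. \<Sum>j=1..n. MM mm l n i j * (q' j t \<bullet> dqd i))
      + (\<Sum>i=1..n. mu mm n i * g * l i * (e3 \<bullet> dq i))"
    by (simp add: p_cart_def p_link_def link_force_def inner_add_left inner_sum_left
        inner_commute[of dx'] sum.distrib)
  moreover note DERIV_imp_deriv[OF Lag_variation_has_derivative, of m mm l g n "x t" dx "\<lambda>i. q i t" dq
      "x' t" dx' "\<lambda>i. q' i t" dqd]
  ultimately show ?thesis using kinetic coupling by (simp add: dq_def dqd_def)
qed

lemma residual_continuous:
  assumes "\<forall>i\<in>{1..n}. \<forall>t. (\<xi> i has_vector_derivative \<xi>' i t) (at t)"
    and "\<forall>t. (dx has_vector_derivative dx' t) (at t)"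
  shows "continuous_on UNIV (\<lambda>t. residual t (dx t) (\<lambda>i. \<xi> i t))"
proof -
  have "continuous_on UNIV dx" using assms(2) by (intro continuous_on_vector_derivative) auto
  hence cart: "continuous_on UNIV (\<lambda>t. (u t - p_cart' t) \<bullet> dx t)"
    using u_cont p_cart'_continuous by (intro continuous_intros)
  have link: "continuous_on UNIV (\<lambda>t. link_force i t \<bullet> cross3 (\<xi> i t) (q i t))"
    if i: "i \<in> {1..n}" for i
  proof -
    have "continuous_on UNIV (\<xi> i)" using assms(1) i by (intro continuous_on_vector_derivative) auto
    thus ?thesis using q_continuous[OF i] link_force_continuous
      by (intro continuous_intros continuous_on_cross)
  qed
  show ?thesis unfolding residual_def using cart link by (intro continuous_on_add continuous_on_sum)
qed

lemma action_variation_eq_integral_residual: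
  assumes "a < b" and "admissible a b \<xi> \<xi>' dx dx'"
  shows "integral {a..b} (\<lambda>t.
            deriv (\<lambda>\<epsilon>. Lag m mm l g n
                (x t + \<epsilon> *\<^sub>R dx t)
                (\<lambda>i. q i t + \<epsilon> *\<^sub>R cross3 (\<xi> i t) (q i t))
                (x' t + \<epsilon> *\<^sub>R dx' t)
                (\<lambda>i. q' i t + \<epsilon> *\<^sub>R (cross3 (\<xi>' i t) (q i t) + cross3 (\<xi> i t) (q' i t)))) 0
            + u t \<bullet> dx t)
       = integral {a..b} (\<lambda>t. residual t (dx t) (\<lambda>i. \<xi> i t))"
proof -
  note adm = assms(2)[unfolded admissible_def]
  define P where "P s = p_cart s \<bullet> dx s + (\<Sum>i=1..n. p_link i s \<bullet> cross3 (\<xi> i s) (q i s))" for s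
  have "(P has_vector_derivative boundary_term_deriv t (dx t) (dx' t) (\<lambda>i. \<xi> i t) (\<lambda>i. \<xi>' i t)) (at t)"
    for t
    unfolding P_def[abs_def] boundary_term_deriv_def using adm q_deriv
    by (intro derivative_intros has_vector_derivative_inner[OF p_cart_has_derivative]
        has_vector_derivative_inner[OF p_link_has_derivative] has_vector_derivative_cross3)
      (auto simp: algebra_simps)
  hence "((\<lambda>t. boundary_term_deriv t (dx t) (dx' t) (\<lambda>i. \<xi> i t) (\<lambda>i. \<xi>' i t)) has_integral (P b - P a))
      {a..b}"
    using assms(1) by (intro fundamental_theorem_of_calculus) (auto intro: has_vector_derivative_at_within)
  moreover have "P b - P a = 0" using adm by (simp add: P_def)
  moreover have "(\<lambda>t. residual t (dx t) (\<lambda>i. \<xi> i t)) integrable_on {a..b}"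
    using adm by (intro integrable_continuous_interval continuous_on_subset[OF residual_continuous]) auto
  ultimately show ?thesis
    by (simp add: Lag_variation_deriv_eq integral_add integral_unique has_integral_integrable)
qed

lemma LdA_iff_integral_residual:
  "LdA m mm l g n q q' x x' u \<longleftrightarrow>
   (\<forall>a b \<xi> \<xi>' dx dx'. a < b \<longrightarrow> admissible a b \<xi> \<xi>' dx dx' \<longrightarrow>
      integral {a..b} (\<lambda>t. residual t (dx t) (\<lambda>i. \<xi> i t)) = 0)"
  unfolding LdA_def using action_variation_eq_integral_residual
  by (simp add: admissible_def)

lemma LdA_imp_cart_equation:
  assumes "LdA m mm l g n q q' x x' u"
  shows "p_cart' t0 = u t0"
proof -
  define c where "c = u t0 - p_cart' t0"
  define h where "h s = (u s - p_cart' s) \<bullet> c" for s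
  have "h t0 = 0"
  proof (rule fundamental_lemma_calculus_of_variations[where h = h])
    show "continuous_on UNIV h"
      unfolding h_def[abs_def] using u_cont p_cart'_continuous by (intro continuous_intros)
    fix a b :: real
    assume "a < b"
    define dx where "dx s = ((s - a) * (b - s)) *\<^sub>R c" for s
    have "admissible a b (\<lambda>i s. 0) (\<lambda>i s. 0) dx (\<lambda>s. (a + b - 2 * s) *\<^sub>R c)"
      unfolding admissible_def dx_def
      using bump_scaleR_has_vector_derivative[OF has_vector_derivative_const]
      by (auto intro!: continuous_intros)
    from assms[unfolded LdA_iff_integral_residual, rule_format, OF \<open>a < b\<close> this]
    have "integral {a..b} (\<lambda>t. residual t (dx t) (\<lambda>i. 0)) = 0" by simp
    thus "integral {a..b} (\<lambda>t. ((t - a) * (b - t)) * h t) = 0"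
      by (simp add: residual_def dx_def h_def)
  qed
  thus ?thesis by (simp add: h_def c_def)
qed

lemma single_link_variation_admissible:
  assumes i0: "i0 \<in> {1..n}"
  shows "admissible a b
    (\<lambda>i s. if i = i0 then ((s - a) * (b - s)) *\<^sub>R cross3 (q i0 s) c else 0)
    (\<lambda>i s. if i = i0 then (a + b - 2 * s) *\<^sub>R cross3 (q i0 s) c
        + ((s - a) * (b - s)) *\<^sub>R cross3 (q' i0 s) c else 0)
    (\<lambda>s. 0) (\<lambda>s. 0)"
proof -
  have "((\<lambda>s. cross3 (q i0 s) c) has_vector_derivative cross3 (q' i0 t) c) (at t)" for t
    using q_deriv i0 by (intro has_vector_derivative_cross3[OF _ has_vector_derivative_const]) auto
  moreover have "continuous_on UNIV (\<lambda>s. if i = i0 then (a + b - 2 * s) *\<^sub>R cross3 (q i0 s) c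
        + ((s - a) * (b - s)) *\<^sub>R cross3 (q' i0 s) c else 0)" for i
    using q_continuous[OF i0] q'_continuous[OF i0]
    by (cases "i = i0") (auto intro!: continuous_intros continuous_on_cross)
  ultimately show ?thesis
    unfolding admissible_def by (auto intro: bump_scaleR_has_vector_derivative simp: dot_cross_self)
qed

lemma LdA_imp_link_equation:
  assumes "LdA m mm l g n q q' x x' u" and i0: "i0 \<in> {1..n}"
  shows "cross3 (q i0 t0) (link_force i0 t0) = 0"
proof -
  define c where "c = link_force i0 t0"
  define h where "h s = link_force i0 s \<bullet> cross3 (cross3 (q i0 s) c) (q i0 s)" for s
  have "h t0 = 0"
  proof (rule fundamental_lemma_calculus_of_variations[where h = h])
    show "continuous_on UNIV h"
      unfolding h_def[abs_def] using link_force_continuous q_continuous[OF i0]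
      by (intro continuous_intros continuous_on_cross)
    fix a b :: real
    assume "a < b"
    \<comment> \<open>vary only link \<open>i0\<close>, along \<open>q\<^sub>i\<^sub>0 \<times> c\<close>; at \<open>t0\<close> the test integrand \<open>h\<close> is \<open>\<bar>q\<^sub>i\<^sub>0 \<times> c\<bar>\<^sup>2\<close>\<close>
    define \<xi> where "\<xi> i s = (if i = i0 then ((s - a) * (b - s)) *\<^sub>R cross3 (q i0 s) c else 0)" for i s
    define \<xi>' where "\<xi>' i s = (if i = i0 then (a + b - 2 * s) *\<^sub>R cross3 (q i0 s) c
         + ((s - a) * (b - s)) *\<^sub>R cross3 (q' i0 s) c else 0)" for i s
    have "admissible a b \<xi> \<xi>' (\<lambda>s. 0) (\<lambda>s. 0)"
      unfolding \<xi>_def[abs_def] \<xi>'_def[abs_def] by (rule single_link_variation_admissible[OF i0])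
    from assms(1)[unfolded LdA_iff_integral_residual, rule_format, OF \<open>a < b\<close> this]
    have "integral {a..b} (\<lambda>t. residual t 0 (\<lambda>i. \<xi> i t)) = 0" by simp
    moreover have "residual t 0 (\<lambda>i. \<xi> i t) = ((t - a) * (b - t)) * h t" for t
    proof -
      have "(\<Sum>i=1..n. link_force i t \<bullet> cross3 (\<xi> i t) (q i t))
          = (\<Sum>i=1..n. if i = i0 then link_force i0 t \<bullet> cross3 (\<xi> i0 t) (q i0 t) else 0)"
        by (rule sum.cong) (auto simp: \<xi>_def)
      also have "\<dots> = link_force i0 t \<bullet> cross3 (\<xi> i0 t) (q i0 t)" using i0 by (simp add: sum.delta)
      finally show ?thesis by (simp add: residual_def \<xi>_def h_def cross_mult_left)
    qed
    ultimately show "integral {a..b} (\<lambda>t. ((t - a) * (b - t)) * h t) = 0" by simp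
  qed
  hence "cross3 (q i0 t0) c \<bullet> cross3 (q i0 t0) c = 0"
    by (simp add: h_def c_def inner_cross3_rotate[of "link_force i0 t0"])
  thus ?thesis by (simp add: c_def)
qed

lemma reduced_EL_imp_LdA:
  assumes "\<forall>t. reduced_EL t"
  shows "LdA m mm l g n q q' x x' u"
proof -
  have "residual t dx \<xi> = 0" for t dx \<xi>
  proof -
    have "link_force i t \<bullet> cross3 (\<xi> i) (q i t) = 0" if "i \<in> {1..n}" for i
      using assms that inner_cross3_rotate[of "link_force i t" "\<xi> i" "q i t"]
      by (simp add: reduced_EL_def)
    thus ?thesis using assms by (simp add: residual_def reduced_EL_def)
  qed
  thus ?thesis unfolding LdA_iff_integral_residual by simp
qed

lemma LdA_iff_reduced_EL: "LdA m mm l g n q q' x x' u \<longleftrightarrow> (\<forall>t. reduced_EL t)"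
  using LdA_imp_cart_equation LdA_imp_link_equation reduced_EL_imp_LdA
  unfolding reduced_EL_def by blast

lemma q_cross_link_force:
  assumes i: "i \<in> {1..n}"
  shows "cross3 (q i t) (link_force i t) = (mu mm n i * g * l i) *\<^sub>R cross3 (q i t) e3
      - cross3 (q i t) (M0' mm l n i (x'' t)) - MM mm l n i i *\<^sub>R cross3 (q i t) (q'' i t)
      - (\<Sum>j\<in>{1..n}-{i}. MM mm l n i j *\<^sub>R cross3 (q i t) (q'' j t))"
proof -
  have "cross3 (q i t) (link_force i t) = (mu mm n i * g * l i) *\<^sub>R cross3 (q i t) e3
      - cross3 (q i t) (M0' mm l n i (x'' t)) - (\<Sum>j=1..n. MM mm l n i j *\<^sub>R cross3 (q i t) (q'' j t))"
    by (simp add: link_force_def p_link'_def cross3_linear_right)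
  thus ?thesis using i by (simp add: sum.remove algebra_simps)
qed

lemma EL1_link_equation_iff:
  assumes i: "i \<in> {1..n}"
  shows "- hat (q i t) (hat (q i t) (M0' mm l n i (x'' t)))
       + MM mm l n i i *\<^sub>R q'' i t
       - (\<Sum>j\<in>{1..n}-{i}. MM mm l n i j *\<^sub>R hat (q i t) (hat (q i t) (q'' j t)))
     = - ((norm (q' i t))^2 * MM mm l n i i) *\<^sub>R q i t
       - (mu mm n i * g * l i) *\<^sub>R hat (q i t) (hat (q i t) e3)
     \<longleftrightarrow> cross3 (q i t) (link_force i t) = 0"
proof (rule eq_iff_of_diff_eq)
  show "- hat (q i t) (hat (q i t) (M0' mm l n i (x'' t)))
       + MM mm l n i i *\<^sub>R q'' i t
       - (\<Sum>j\<in>{1..n}-{i}. MM mm l n i j *\<^sub>R hat (q i t) (hat (q i t) (q'' j t)))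
     - (- ((norm (q' i t))^2 * MM mm l n i i) *\<^sub>R q i t
       - (mu mm n i * g * l i) *\<^sub>R hat (q i t) (hat (q i t) e3))
     = cross3 (q i t) (cross3 (q i t) (link_force i t))"
    unfolding q_cross_link_force[OF i] hat_def
    by (simp add: cross3_linear_right q_cross_q_cross_q''[OF i] algebra_simps)
  show "cross3 (q i t) (cross3 (q i t) (link_force i t)) = 0 \<longleftrightarrow> cross3 (q i t) (link_force i t) = 0"
    by (rule cross3_cross3_eq_0_iff[OF q_inner_self[OF i]])
qed

lemma EL1_iff_reduced_EL: "EL1 m mm l g n q q' q'' x'' u t \<longleftrightarrow> reduced_EL t"
  unfolding EL1_def reduced_EL_def p_cart'_def using EL1_link_equation_iff by simp

lemma EL2_iff_reduced_EL:
  assumes w: "\<forall>i\<in>{1..n}. w i t = cross3 (q i t) (q' i t)"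
    and w': "\<forall>i\<in>{1..n}. w' i t = cross3 (q i t) (q'' i t)"
  shows "EL2 m mm l g n q q' w w' x'' u t \<longleftrightarrow> reduced_EL t"
proof -
  have cart: "M00 m mm n *\<^sub>R x'' t - (\<Sum>j=1..n. M0 mm l n j (hat (q j t) (w' j t)))
      = (\<Sum>j=1..n. M0 mm l n j ((norm (w j t))^2 *\<^sub>R q j t)) + u t \<longleftrightarrow> p_cart' t = u t"
  proof (rule eq_iff_of_diff_eq)
    have acceleration: "(\<Sum>j=1..n. M0 mm l n j (hat (q j t) (w' j t))) =
        (\<Sum>j=1..n. - ((norm (q' j t))^2 *\<^sub>R M0 mm l n j (q j t)) - M0 mm l n j (q'' j t))"
      by (rule sum.cong[OF refl]) (simp add: hat_def w' q_cross_q_cross_q'' M0_diff M0_scaleR M0_uminus)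
    have centripetal: "(\<Sum>j=1..n. M0 mm l n j ((norm (w j t))^2 *\<^sub>R q j t)) =
        (\<Sum>j=1..n. (norm (q' j t))^2 *\<^sub>R M0 mm l n j (q j t))"
      by (rule sum.cong[OF refl]) (simp add: w norm_q_cross_q' M0_scaleR)
    show "M00 m mm n *\<^sub>R x'' t - (\<Sum>j=1..n. M0 mm l n j (hat (q j t) (w' j t)))
        - ((\<Sum>j=1..n. M0 mm l n j ((norm (w j t))^2 *\<^sub>R q j t)) + u t) = p_cart' t - u t"
      unfolding acceleration centripetal by (simp add: p_cart'_def sum_subtractf sum_negf algebra_simps)
  qed simp
  have link: "hat (q i t) (M0' mm l n i (x'' t))
       + MM mm l n i i *\<^sub>R w' i t
       - (\<Sum>j\<in>{1..n}-{i}. MM mm l n i j *\<^sub>R hat (q i t) (hat (q j t) (w' j t)))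
     = (\<Sum>j\<in>{1..n}-{i}. (MM mm l n i j * (norm (w j t))^2) *\<^sub>R hat (q i t) (q j t))
       + (mu mm n i * g * l i) *\<^sub>R hat (q i t) e3
     \<longleftrightarrow> cross3 (q i t) (link_force i t) = 0"
    if i: "i \<in> {1..n}" for i
  proof (rule eq_iff_of_diff_eq)
    have acceleration: "(\<Sum>j\<in>{1..n}-{i}. MM mm l n i j *\<^sub>R hat (q i t) (hat (q j t) (w' j t))) =
       (\<Sum>j\<in>{1..n}-{i}. (- (MM mm l n i j * (norm (q' j t))^2)) *\<^sub>R cross3 (q i t) (q j t)
             - MM mm l n i j *\<^sub>R cross3 (q i t) (q'' j t))"
      by (rule sum.cong[OF refl])
        (simp add: hat_def w' q_cross_q_cross_q'' cross3_linear_right scaleR_right_diff_distrib)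
    have centripetal: "(\<Sum>j\<in>{1..n}-{i}. (MM mm l n i j * (norm (w j t))^2) *\<^sub>R hat (q i t) (q j t)) =
       (\<Sum>j\<in>{1..n}-{i}. (MM mm l n i j * (norm (q' j t))^2) *\<^sub>R cross3 (q i t) (q j t))"
      by (rule sum.cong[OF refl]) (simp add: hat_def w norm_q_cross_q')
    show "hat (q i t) (M0' mm l n i (x'' t))
       + MM mm l n i i *\<^sub>R w' i t
       - (\<Sum>j\<in>{1..n}-{i}. MM mm l n i j *\<^sub>R hat (q i t) (hat (q j t) (w' j t)))
     - ((\<Sum>j\<in>{1..n}-{i}. (MM mm l n i j * (norm (w j t))^2) *\<^sub>R hat (q i t) (q j t))
       + (mu mm n i * g * l i) *\<^sub>R hat (q i t) e3) = - cross3 (q i t) (link_force i t)"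
      unfolding acceleration centripetal q_cross_link_force[OF i]
      by (simp add: hat_def w'[rule_format, OF i] sum_subtractf sum_negf algebra_simps)
  qed simp
  have "q' i t = cross3 (w i t) (q i t)" if i: "i \<in> {1..n}" for i
    using q_inner_self[OF i] q_inner_q'[OF i] w i cross_skew[of "cross3 (q i t) (q' i t)" "q i t"]
    by (simp add: cross3_cross3 inner_commute)
  thus ?thesis unfolding EL2_def reduced_EL_def using cart link by auto
qed

lemma angular_velocity_unique:
  assumes w_deriv: "\<forall>i\<in>{1..n}. \<forall>t. (w i has_vector_derivative w' i t) (at t)"
    and w_orth: "\<forall>i\<in>{1..n}. \<forall>t. w i t \<bullet> q i t = 0"
    and EL2: "\<forall>t. EL2 m mm l g n q q' w w' x'' u t"
    and i: "i \<in> {1..n}"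
  shows "w i = (\<lambda>t. cross3 (q i t) (q' i t))" and "w' i t = cross3 (q i t) (q'' i t)"
proof -
  show w: "w i = (\<lambda>t. cross3 (q i t) (q' i t))"
  proof
    fix s
    have "q' i s = cross3 (w i s) (q i s)" using EL2 i unfolding EL2_def by blast
    thus "w i s = cross3 (q i s) (q' i s)"
      using q_inner_self[OF i] w_orth i by (simp add: cross3_cross3 inner_commute)
  qed
  have "(w i has_vector_derivative cross3 (q i t) (q'' i t) + cross3 (q' i t) (q' i t)) (at t)"
    unfolding w using q_deriv q'_deriv i by (intro has_vector_derivative_cross3) auto
  moreover have "(w i has_vector_derivative w' i t) (at t)" using w_deriv i by blast
  ultimately show "w' i t = cross3 (q i t) (q'' i t)"
    using vector_derivative_unique_at by fastforce
qed

lemma EL1_iff_ex_EL2: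
  "(\<forall>t. EL1 m mm l g n q q' q'' x'' u t) \<longleftrightarrow>
   (\<exists>w w' :: nat \<Rightarrow> real \<Rightarrow> real^3.
      (\<forall>i\<in>{1..n}. \<forall>t. (w i has_vector_derivative w' i t) (at t)) \<and>
      (\<forall>i\<in>{1..n}. \<forall>t. w i t \<bullet> q i t = 0) \<and>
      (\<forall>t. EL2 m mm l g n q q' w w' x'' u t))" (is "_ \<longleftrightarrow> (\<exists>w w'. ?EL2 w w')")
proof
  assume "\<forall>t. EL1 m mm l g n q q' q'' x'' u t"
  hence "\<forall>t. EL2 m mm l g n q q' (\<lambda>i t. cross3 (q i t) (q' i t)) (\<lambda>i t. cross3 (q i t) (q'' i t)) x'' u t"
    by (simp add: EL1_iff_reduced_EL EL2_iff_reduced_EL)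
  moreover have "((\<lambda>t. cross3 (q i t) (q' i t)) has_vector_derivative cross3 (q i t) (q'' i t)) (at t)"
    if "i \<in> {1..n}" for i t
    using q_deriv q'_deriv that by (intro has_vector_derivative_cross3) auto
  ultimately show "\<exists>w w'. ?EL2 w w'"
    by (intro exI[of _ "\<lambda>i t. cross3 (q i t) (q' i t)"] exI[of _ "\<lambda>i t. cross3 (q i t) (q'' i t)"])
      (simp add: inner_commute[of "cross3 _ _"] dot_cross_self)
next
  assume "\<exists>w w'. ?EL2 w w'"
  then obtain w w' where w_deriv: "\<forall>i\<in>{1..n}. \<forall>t. (w i has_vector_derivative w' i t) (at t)"
    and w_orth: "\<forall>i\<in>{1..n}. \<forall>t. w i t \<bullet> q i t = 0" and EL2: "\<forall>t. EL2 m mm l g n q q' w w' x'' u t"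
    by blast
  have "EL2 m mm l g n q q' w w' x'' u t \<longleftrightarrow> reduced_EL t" for t
    using angular_velocity_unique[OF w_deriv w_orth EL2] by (intro EL2_iff_reduced_EL) simp_all
  thus "\<forall>t. EL1 m mm l g n q q' q'' x'' u t" using EL2 by (simp add: EL1_iff_reduced_EL)
qed

end

theorem proposition1:
  fixes m g :: real and mm l :: "nat \<Rightarrow> real" and n :: nat
    and q q' q'' :: "nat \<Rightarrow> real \<Rightarrow> real^3"
    and x x' x'' u :: "real \<Rightarrow> real^2"
  assumes "n \<ge> 1" and "m > 0" and "g > 0"
    and "\<forall>i\<in>{1..n}. mm i > 0" and "\<forall>i\<in>{1..n}. l i > 0"
    and "\<forall>i\<in>{1..n}. \<forall>t. norm (q i t) = 1"
    and "\<forall>i\<in>{1..n}. \<forall>t. (q i has_vector_derivative q' i t) (at t)"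
    and "\<forall>i\<in>{1..n}. \<forall>t. (q' i has_vector_derivative q'' i t) (at t)"
    and "\<forall>i\<in>{1..n}. continuous_on UNIV (q'' i)"
    and "\<forall>t. (x has_vector_derivative x' t) (at t)"
    and "\<forall>t. (x' has_vector_derivative x'' t) (at t)"
    and "continuous_on UNIV x''"
    and "continuous_on UNIV u"
  shows "(LdA m mm l g n q q' x x' u \<longleftrightarrow> (\<forall>t. EL1 m mm l g n q q' q'' x'' u t)) \<and>
         ((\<forall>t. EL1 m mm l g n q q' q'' x'' u t) \<longleftrightarrow>
          (\<exists>w w' :: nat \<Rightarrow> real \<Rightarrow> real^3.
              (\<forall>i\<in>{1..n}. \<forall>t. (w i has_vector_derivative w' i t) (at t)) \<and>
              (\<forall>i\<in>{1..n}. \<forall>t. w i t \<bullet> q i t = 0) \<and>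
              (\<forall>t. EL2 m mm l g n q q' w w' x'' u t)))"
proof -
  interpret pendulum_motion m g mm l n q q' q'' x x' x'' u
    using assms(6-9,11-13) by unfold_locales
  show ?thesis using LdA_iff_reduced_EL EL1_iff_reduced_EL EL1_iff_ex_EL2 by simp
qed

end
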